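(* Let $V$ be a complex normed vector space and $x\in l^{\infty}(V)$. Then $p(x)=0$ if and only if $L(x)=0$ for every Banach limit functional $L$ on $l^\infty(V)$.
   Context: $\mathbb{N}=\{1,2,3,\dots\}$. $l^{\infty}(V)$ is the space of bounded sequences $x=\{x_n\}_{n=1}^\infty$ in $V$ with norm $\|x\|_\infty=\sup_n\|x_n\|_V$. $T$ is the left shift: $T\{x_1,x_2,x_3,\dots\}=\{x_2,x_3,\dots\}$. A Banach limit functional is a bounded (complex-)linear functional $L$ on $l^\infty(V)$ such that $\|L\|\le 1$ and $L(Tx)=L(x)$ for all $x\in l^\infty(V)$. For $x\in l^\infty(V)$, $p(x):=\lim_{n\to\infty}\left(\sup_{j\in\mathbb{N}}\frac1n\left\|\sum_{i=0}^{n-1}x_{i+j}\right\|_V\right)$ (this limit exists). *)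

theory Defs
  imports "HOL-Analysis.Analysis"
begin

text \<open>A complex normed vector space: a real normed vector space 'a together with a
complex scalar multiplication sc extending the real one and compatible with the norm.\<close>
definition complex_normed_space :: "(complex \<Rightarrow> 'a::real_normed_vector \<Rightarrow> 'a) \<Rightarrow> bool" where
  "complex_normed_space sc \<longleftrightarrow>
     (\<forall>r x. sc (complex_of_real r) x = scaleR r x) \<and>
     (\<forall>a b x. sc (a * b) x = sc a (sc b x)) \<and>
     (\<forall>a x y. sc a (x + y) = sc a x + sc a y) \<and>
     (\<forall>a b x. sc (a + b) x = sc a x + sc b x) \<and>
     (\<forall>a x. norm (sc a x) = cmod a * norm x)"

text \<open>l-infinity: bounded sequences (indexed from 0 instead of 1).\<close>
definition linf :: "(nat \<Rightarrow> 'a::real_normed_vector) set" where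
  "linf = {x. Bseq x}"

definition supnorm :: "(nat \<Rightarrow> 'a::real_normed_vector) \<Rightarrow> real" where
  "supnorm x = (SUP n. norm (x n))"

definition lshift :: "(nat \<Rightarrow> 'a) \<Rightarrow> nat \<Rightarrow> 'a" where
  "lshift x = (\<lambda>n. x (Suc n))"

definition banach_limit ::
  "(complex \<Rightarrow> 'a::real_normed_vector \<Rightarrow> 'a) \<Rightarrow> ((nat \<Rightarrow> 'a) \<Rightarrow> complex) \<Rightarrow> bool" where
  "banach_limit sc L \<longleftrightarrow>
     (\<forall>x\<in>linf. \<forall>y\<in>linf. L (\<lambda>n. x n + y n) = L x + L y) \<and>
     (\<forall>c. \<forall>x\<in>linf. L (\<lambda>n. sc c (x n)) = c * L x) \<and>
     (\<forall>x\<in>linf. cmod (L x) \<le> supnorm x) \<and>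
     (\<forall>x\<in>linf. L (lshift x) = L x)"

definition pfun :: "(nat \<Rightarrow> 'a::real_normed_vector) \<Rightarrow> real" where
  "pfun x = lim (\<lambda>n. SUP j. norm (\<Sum>i<n. x (i + j)) / real n)"

end

theory Submission
  imports Defs "HOL-Library.Function_Algebras"
begin

text \<open>
  One direction is a direct estimate: a Banach limit takes the same value on \<open>x\<close> and on the
  averaged window sums \<open>(1/n) \<Sum>i<n. x (i + j)\<close>, whose sup-norm is \<open>avg_sup x n\<close>; hence
  \<open>|L x| \<le> p x\<close>. For the converse, the Hahn-Banach theorem (proved below for a sublinear
  functional on a subspace of a real vector space, via Zorn's lemma on dominated linear graphs)
  yields a real-linear \<open>f \<le> p\<close> on \<open>l\<^sup>\<infinity>\<close> with \<open>f x = p x\<close>. Domination by \<open>p\<close> forces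
  shift-invariance, since \<open>p (T y - y) \<le> 0\<close>, and the complexification
  \<open>L y = f y - i f (i y)\<close> is then a Banach limit with \<open>Re (L x) = p x\<close>.
\<close>

definition sublinear_on :: "'v::real_vector set \<Rightarrow> ('v \<Rightarrow> real) \<Rightarrow> bool" where
  "sublinear_on S p \<longleftrightarrow>
     (\<forall>x\<in>S. \<forall>y\<in>S. p (x + y) \<le> p x + p y) \<and> (\<forall>x\<in>S. \<forall>r>0. p (r *\<^sub>R x) = r * p x)"

lemma sublinear_onD:
  assumes "sublinear_on S p"
  shows "\<And>x y. x \<in> S \<Longrightarrow> y \<in> S \<Longrightarrow> p (x + y) \<le> p x + p y"
    and "\<And>x r. x \<in> S \<Longrightarrow> r > 0 \<Longrightarrow> p (r *\<^sub>R x) = r * p x"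
  using assms unfolding sublinear_on_def by blast+

lemma sublinear_on_zero:
  assumes "subspace S" "sublinear_on S p"
  shows "p 0 = 0"
  using sublinear_onD(2)[OF assms(2) subspace_0[OF assms(1)], of 2] by simp

text \<open>Graphs of partial linear functionals on \<open>S\<close> dominated by \<open>p\<close>; Zorn's lemma is applied to
  these sets ordered by inclusion.\<close>
definition dominated_graph :: "'v::real_vector set \<Rightarrow> ('v \<Rightarrow> real) \<Rightarrow> ('v \<times> real) set \<Rightarrow> bool" where
  "dominated_graph S p G \<longleftrightarrow> fst ` G \<subseteq> S \<and> (0, 0) \<in> G \<and>
     (\<forall>x a b. (x, a) \<in> G \<longrightarrow> (x, b) \<in> G \<longrightarrow> a = b) \<and>
     (\<forall>x a y b. (x, a) \<in> G \<longrightarrow> (y, b) \<in> G \<longrightarrow> (x + y, a + b) \<in> G) \<and>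
     (\<forall>x a r. (x, a) \<in> G \<longrightarrow> (r *\<^sub>R x, r * a) \<in> G) \<and>
     (\<forall>x a. (x, a) \<in> G \<longrightarrow> a \<le> p x)"

lemma dominated_graphI:
  assumes "\<And>x a. (x, a) \<in> G \<Longrightarrow> x \<in> S" "(0, 0) \<in> G"
    "\<And>x a b. (x, a) \<in> G \<Longrightarrow> (x, b) \<in> G \<Longrightarrow> a = b"
    "\<And>x a y b. (x, a) \<in> G \<Longrightarrow> (y, b) \<in> G \<Longrightarrow> (x + y, a + b) \<in> G"
    "\<And>x a r. (x, a) \<in> G \<Longrightarrow> (r *\<^sub>R x, r * a) \<in> G"
    "\<And>x a. (x, a) \<in> G \<Longrightarrow> a \<le> p x"
  shows "dominated_graph S p G"
proof -
  have "fst ` G \<subseteq> S" using assms(1) by fastforce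
  then show ?thesis unfolding dominated_graph_def using assms(2-6) by blast
qed

lemma dominated_graphD:
  assumes "dominated_graph S p G"
  shows "\<And>x a. (x, a) \<in> G \<Longrightarrow> x \<in> S" "(0, 0) \<in> G"
    "\<And>x a b. (x, a) \<in> G \<Longrightarrow> (x, b) \<in> G \<Longrightarrow> a = b"
    "\<And>x a y b. (x, a) \<in> G \<Longrightarrow> (y, b) \<in> G \<Longrightarrow> (x + y, a + b) \<in> G"
    "\<And>x a r. (x, a) \<in> G \<Longrightarrow> (r *\<^sub>R x, r * a) \<in> G"
    "\<And>x a. (x, a) \<in> G \<Longrightarrow> a \<le> p x"
  using assms unfolding dominated_graph_def by (auto simp: image_subset_iff)

lemma dominated_graph_ray:
  assumes S: "subspace S" and p: "sublinear_on S p" and x0: "x0 \<in> S"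
  shows "dominated_graph S p {(t *\<^sub>R x0, t * p x0) | t. True}" (is "dominated_graph S p ?R")
proof (rule dominated_graphI)
  have p0: "p 0 = 0" by (rule sublinear_on_zero[OF S p])
  show "(0, 0) \<in> ?R" by (rule CollectI, rule exI[of _ 0]) simp
  show "x \<in> S" if "(x, a) \<in> ?R" for x a
    using that subspace_scale[OF S x0] by auto
  show "a = b" if ab: "(x, a) \<in> ?R" "(x, b) \<in> ?R" for x a b
  proof -
    obtain t s where ts: "x = t *\<^sub>R x0" "a = t * p x0" "x = s *\<^sub>R x0" "b = s * p x0"
      using ab by blast
    show ?thesis
    proof (cases "t = s")
      case False
      then have "x0 = 0" using ts by (metis scaleR_cancel_right)
      then show ?thesis using ts p0 by simp
    qed (use ts in simp)
  qed
  show "(x + y, a + b) \<in> ?R" if xy: "(x, a) \<in> ?R" "(y, b) \<in> ?R" for x a y b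
  proof -
    obtain t s where "x = t *\<^sub>R x0" "a = t * p x0" "y = s *\<^sub>R x0" "b = s * p x0"
      using xy by blast
    then show ?thesis by (intro CollectI exI[of _ "t + s"]) (simp add: algebra_simps)
  qed
  show "(r *\<^sub>R x, r * a) \<in> ?R" if xa: "(x, a) \<in> ?R" for x a r
  proof -
    obtain t where "x = t *\<^sub>R x0" "a = t * p x0" using xa by blast
    then show ?thesis by (intro CollectI exI[of _ "r * t"]) simp
  qed
  show "a \<le> p x" if xa: "(x, a) \<in> ?R" for x a
  proof -
    obtain t where ts: "x = t *\<^sub>R x0" "a = t * p x0" using xa by blast
    have mx0: "- x0 \<in> S" by (rule subspace_neg[OF S x0])
    \<comment> \<open>Subadditivity at \<open>x0 + (-x0) = 0\<close> gives \<open>- p x0 \<le> p (-x0)\<close>, the case \<open>t < 0\<close>.\<close>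
    have opp: "- p x0 \<le> p (- x0)" using sublinear_onD(1)[OF p x0 mx0] p0 by simp
    consider "t > 0" | "t = 0" | "t < 0" by linarith
    then show ?thesis
    proof cases
      case 1 then show ?thesis using sublinear_onD(2)[OF p x0] ts by simp
    next
      case 2 then show ?thesis using ts p0 by simp
    next
      case 3
      then have "p x = (- t) * p (- x0)" using sublinear_onD(2)[OF p mx0, of "- t"] ts by simp
      moreover have "(- t) * (- p x0) \<le> (- t) * p (- x0)"
        using 3 opp by (intro mult_left_mono) auto
      ultimately show ?thesis using ts by simp
    qed
  qed
qed

lemma dominated_graph_chain_Union:
  assumes ne: "C \<noteq> {}" and good: "\<And>G. G \<in> C \<Longrightarrow> dominated_graph S p G"
    and chain: "\<And>G H. G \<in> C \<Longrightarrow> H \<in> C \<Longrightarrow> G \<subseteq> H \<or> H \<subseteq> G"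
  shows "dominated_graph S p (\<Union>C)"
proof -
  have two: "\<exists>G\<in>C. u \<in> G \<and> v \<in> G" if uv: "u \<in> \<Union>C" "v \<in> \<Union>C" for u v
  proof -
    obtain G H where "G \<in> C" "H \<in> C" "u \<in> G" "v \<in> H" using uv by blast
    then show ?thesis using chain[of G H] by blast
  qed
  obtain G0 where G0: "G0 \<in> C" using ne by blast
  show ?thesis
  proof (rule dominated_graphI)
    show "(0, 0) \<in> \<Union>C" using dominated_graphD(2)[OF good[OF G0]] G0 by blast
    show "x \<in> S" if "(x, a) \<in> \<Union>C" for x a
      using that dominated_graphD(1)[OF good] by blast
    show "a = b" if "(x, a) \<in> \<Union>C" "(x, b) \<in> \<Union>C" for x a b
      using two[OF that] dominated_graphD(3)[OF good] by blast
    show "(x + y, a + b) \<in> \<Union>C" if "(x, a) \<in> \<Union>C" "(y, b) \<in> \<Union>C" for x a y b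
      using two[OF that] dominated_graphD(4)[OF good] by blast
    show "(r *\<^sub>R x, r * a) \<in> \<Union>C" if "(x, a) \<in> \<Union>C" for x a r
      using that dominated_graphD(5)[OF good] by blast
    show "a \<le> p x" if "(x, a) \<in> \<Union>C" for x a
      using that dominated_graphD(6)[OF good] by blast
  qed
qed

lemma dominated_graph_extension_constant:
  assumes S: "subspace S" and p: "sublinear_on S p" and M: "dominated_graph S p M"
    and y: "y \<in> S"
  obtains c where "\<And>x a. (x, a) \<in> M \<Longrightarrow> a - p (x - y) \<le> c"
    and "\<And>z b. (z, b) \<in> M \<Longrightarrow> c \<le> p (z + y) - b"
proof -
  have sep: "a - p (x - y) \<le> p (z + y) - b" if xa: "(x, a) \<in> M" and zb: "(z, b) \<in> M" for x a z b
  proof -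
    have xS: "x \<in> S" and zS: "z \<in> S" using dominated_graphD(1)[OF M] xa zb by blast+
    have "a + b \<le> p (x + z)" using dominated_graphD(6)[OF M dominated_graphD(4)[OF M xa zb]] .
    also have "x + z = (x - y) + (z + y)" by simp
    also have "p \<dots> \<le> p (x - y) + p (z + y)"
      by (rule sublinear_onD(1)[OF p subspace_diff[OF S xS y] subspace_add[OF S zS y]])
    finally show ?thesis by simp
  qed
  define B where "B = {a - p (x - y) | x a. (x, a) \<in> M}"
  have B_ne: "B \<noteq> {}" using dominated_graphD(2)[OF M] by (auto simp: B_def)
  have B_bdd: "bdd_above B"
    unfolding bdd_above_def B_def using sep[OF _ dominated_graphD(2)[OF M]] by auto
  show ?thesis
  proof (rule that[of "Sup B"])
    show "a - p (x - y) \<le> Sup B" if xa: "(x, a) \<in> M" for x a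
      by (rule cSup_upper[OF _ B_bdd]) (use xa in \<open>auto simp: B_def\<close>)
    show "Sup B \<le> p (z + y) - b" if zb: "(z, b) \<in> M" for z b
      by (rule cSup_least[OF B_ne]) (use sep zb in \<open>auto simp: B_def\<close>)
  qed
qed

lemma dominated_graph_extension_bound:
  assumes S: "subspace S" and p: "sublinear_on S p" and M: "dominated_graph S p M"
    and y: "y \<in> S"
    and lo: "\<And>x a. (x, a) \<in> M \<Longrightarrow> a - p (x - y) \<le> c"
    and hi: "\<And>z b. (z, b) \<in> M \<Longrightarrow> c \<le> p (z + y) - b"
    and xa: "(x, a) \<in> M"
  shows "a + t * c \<le> p (x + t *\<^sub>R y)"
proof -
  have xS: "x \<in> S" using dominated_graphD(1)[OF M xa] .
  consider "t > 0" | "t = 0" | "t < 0" by linarith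
  then show ?thesis
  proof cases
    case 1
    have "c \<le> p ((1/t) *\<^sub>R x + y) - (1/t) * a" by (rule hi[OF dominated_graphD(5)[OF M xa]])
    then have "t * c \<le> t * p ((1/t) *\<^sub>R x + y) - a" using 1 by (simp add: field_simps)
    also have "t * p ((1/t) *\<^sub>R x + y) = p (t *\<^sub>R ((1/t) *\<^sub>R x + y))"
      using sublinear_onD(2)[OF p subspace_add[OF S subspace_scale[OF S xS] y] 1] by simp
    also have "t *\<^sub>R ((1/t) *\<^sub>R x + y) = x + t *\<^sub>R y" using 1 by (simp add: algebra_simps)
    finally show ?thesis by simp
  next
    case 2
    then show ?thesis using dominated_graphD(6)[OF M xa] by simp
  next
    case 3
    define s where "s = - t"
    have s: "s > 0" using 3 by (simp add: s_def)
    have "(1/s) * a - p ((1/s) *\<^sub>R x - y) \<le> c" by (rule lo[OF dominated_graphD(5)[OF M xa]])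
    then have "a - s * p ((1/s) *\<^sub>R x - y) \<le> s * c" using s by (simp add: field_simps)
    moreover have "s * p ((1/s) *\<^sub>R x - y) = p (s *\<^sub>R ((1/s) *\<^sub>R x - y))"
      using sublinear_onD(2)[OF p subspace_diff[OF S subspace_scale[OF S xS] y] s] by simp
    moreover have "s *\<^sub>R ((1/s) *\<^sub>R x - y) = x + t *\<^sub>R y"
      using s by (simp add: algebra_simps s_def)
    ultimately show ?thesis by (simp add: s_def)
  qed
qed

definition graph_extension :: "('v::real_vector \<times> real) set \<Rightarrow> 'v \<Rightarrow> real \<Rightarrow> ('v \<times> real) set" where
  "graph_extension M y c = {(x + t *\<^sub>R y, a + t * c) | x a t. (x, a) \<in> M}"

lemma graph_extension_superset: "M \<subseteq> graph_extension M y c"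
proof
  fix u assume "u \<in> M"
  then show "u \<in> graph_extension M y c"
    unfolding graph_extension_def by (cases u) (force intro: exI[of _ 0])
qed

text \<open>If \<open>y\<close> is not yet in the domain, the extension is still the graph of a function: two
  representations \<open>x1 + t1 y = x2 + t2 y\<close> with \<open>t1 \<noteq> t2\<close> would put \<open>y\<close> into the domain.\<close>
lemma graph_extension_single_valued:
  assumes M: "dominated_graph S p M" and y_new: "y \<notin> fst ` M"
    and xa: "(x, a) \<in> graph_extension M y c" and xb: "(x, b) \<in> graph_extension M y c"
  shows "a = b"
proof -
  obtain x1 a1 t1 x2 a2 t2 where e: "x = x1 + t1 *\<^sub>R y" "a = a1 + t1 * c" "(x1, a1) \<in> M"
    "x = x2 + t2 *\<^sub>R y" "b = a2 + t2 * c" "(x2, a2) \<in> M"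
    using xa xb unfolding graph_extension_def by blast
  show ?thesis
  proof (cases "t1 = t2")
    case True
    then show ?thesis using e dominated_graphD(3)[OF M] by auto
  next
    case False
    have diff: "(x1 + (-1) *\<^sub>R x2, a1 + (-1) * a2) \<in> M"
      using dominated_graphD(4)[OF M e(3) dominated_graphD(5)[OF M e(6)]] .
    have "x1 - x2 = (t2 - t1) *\<^sub>R y" using e by (simp add: algebra_simps)
    then have "y = (1 / (t2 - t1)) *\<^sub>R (x1 + (-1) *\<^sub>R x2)" using False by simp
    then have "y \<in> fst ` M" using dominated_graphD(5)[OF M diff] by force
    then show ?thesis using y_new by blast
  qed
qed

lemma dominated_graph_extension:
  assumes S: "subspace S" and p: "sublinear_on S p" and M: "dominated_graph S p M"
    and y: "y \<in> S" and y_new: "y \<notin> fst ` M"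
    and lo: "\<And>x a. (x, a) \<in> M \<Longrightarrow> a - p (x - y) \<le> c"
    and hi: "\<And>z b. (z, b) \<in> M \<Longrightarrow> c \<le> p (z + y) - b"
  shows "dominated_graph S p (graph_extension M y c)" (is "dominated_graph S p ?M'")
proof (rule dominated_graphI)
  show "(0, 0) \<in> ?M'" using graph_extension_superset dominated_graphD(2)[OF M] by blast
  show "x \<in> S" if "(x, a) \<in> ?M'" for x a
    using that dominated_graphD(1)[OF M] subspace_add[OF S] subspace_scale[OF S y]
    by (auto simp: graph_extension_def)
  show "a = b" if "(x, a) \<in> ?M'" "(x, b) \<in> ?M'" for x a b
    using graph_extension_single_valued[OF M y_new that] .
  show "(x + x', a + b) \<in> ?M'" if xx': "(x, a) \<in> ?M'" "(x', b) \<in> ?M'" for x a x' b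
  proof -
    obtain x1 a1 t1 x2 a2 t2 where e: "x = x1 + t1 *\<^sub>R y" "a = a1 + t1 * c" "(x1, a1) \<in> M"
      "x' = x2 + t2 *\<^sub>R y" "b = a2 + t2 * c" "(x2, a2) \<in> M"
      using xx' unfolding graph_extension_def by blast
    then show ?thesis unfolding graph_extension_def using dominated_graphD(4)[OF M e(3) e(6)]
      by (intro CollectI exI[of _ "x1 + x2"] exI[of _ "a1 + a2"] exI[of _ "t1 + t2"])
        (simp add: algebra_simps)
  qed
  show "(r *\<^sub>R x, r * a) \<in> ?M'" if xa: "(x, a) \<in> ?M'" for x a r
  proof -
    obtain x1 a1 t where e: "x = x1 + t *\<^sub>R y" "a = a1 + t * c" "(x1, a1) \<in> M"
      using xa unfolding graph_extension_def by blast
    then show ?thesis unfolding graph_extension_def using dominated_graphD(5)[OF M e(3), of r]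
      by (intro CollectI exI[of _ "r *\<^sub>R x1"] exI[of _ "r * a1"] exI[of _ "r * t"])
        (simp add: algebra_simps)
  qed
  show "a \<le> p x" if "(x, a) \<in> ?M'" for x a
    using that dominated_graph_extension_bound[OF S p M y lo hi]
    by (auto simp: graph_extension_def)
qed

lemma dominated_graph_extend:
  assumes S: "subspace S" and p: "sublinear_on S p" and M: "dominated_graph S p M"
    and y: "y \<in> S" and y_new: "y \<notin> fst ` M"
  shows "\<exists>M'. dominated_graph S p M' \<and> M \<subset> M'"
proof -
  obtain c where lo: "\<And>x a. (x, a) \<in> M \<Longrightarrow> a - p (x - y) \<le> c"
    and hi: "\<And>z b. (z, b) \<in> M \<Longrightarrow> c \<le> p (z + y) - b"
    using dominated_graph_extension_constant[OF S p M y] by blast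
  have "(y, c) \<in> graph_extension M y c"
    unfolding graph_extension_def using dominated_graphD(2)[OF M]
    by (intro CollectI exI[of _ 0] exI[of _ "1::real"]) simp
  moreover have "(y, c) \<notin> M" using y_new by force
  ultimately have "M \<subset> graph_extension M y c" using graph_extension_superset by blast
  then show ?thesis using dominated_graph_extension[OF S p M y y_new lo hi] by blast
qed

lemma dominated_graph_total_extension:
  assumes S: "subspace S" and p: "sublinear_on S p" and G: "dominated_graph S p G"
  obtains M where "dominated_graph S p M" "G \<subseteq> M" "fst ` M = S"
proof -
  define A where "A = {M. dominated_graph S p M \<and> G \<subseteq> M}"
  have "\<exists>M\<in>A. \<forall>X\<in>A. M \<subseteq> X \<longrightarrow> X = M"
  proof (rule subset_Zorn_nonempty)
    show "A \<noteq> {}" using G by (auto simp: A_def)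
  next
    fix C assume C_ne: "C \<noteq> {}" and chain: "subset.chain A C"
    then have "dominated_graph S p (\<Union>C)"
      by (intro dominated_graph_chain_Union) (auto simp: A_def subset_chain_def)
    moreover have "G \<subseteq> \<Union>C" using C_ne chain unfolding A_def subset_chain_def by blast
    ultimately show "\<Union>C \<in> A" unfolding A_def by blast
  qed
  then obtain M where MA: "M \<in> A" and max_A: "\<And>X. X \<in> A \<Longrightarrow> M \<subseteq> X \<Longrightarrow> X = M"
    by blast
  have M: "dominated_graph S p M" and GM: "G \<subseteq> M" using MA by (simp_all add: A_def)
  have maximal: "X = M" if "dominated_graph S p X" "M \<subseteq> X" for X
    using max_A[of X] that GM by (simp add: A_def)
  have "S \<subseteq> fst ` M"
  proof
    fix y assume y: "y \<in> S"
    show "y \<in> fst ` M"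
    proof (rule ccontr)
      assume "y \<notin> fst ` M"
      then obtain M' where "dominated_graph S p M'" "M \<subset> M'"
        using dominated_graph_extend[OF S p M y] by blast
      then show False using maximal by blast
    qed
  qed
  moreover have "fst ` M \<subseteq> S" using dominated_graphD(1)[OF M] by force
  ultimately show ?thesis using that M GM by blast
qed

theorem hahn_banach_sublinear:
  assumes S: "subspace S" and p: "sublinear_on S p" and x0: "x0 \<in> S"
  obtains f where "\<And>x y. x \<in> S \<Longrightarrow> y \<in> S \<Longrightarrow> f (x + y) = f x + f y"
    and "\<And>x r. x \<in> S \<Longrightarrow> f (r *\<^sub>R x) = r * f x"
    and "\<And>x. x \<in> S \<Longrightarrow> f x \<le> p x"
    and "f x0 = p x0"
proof -
  obtain M where M: "dominated_graph S p M"
    and ray: "{(t *\<^sub>R x0, t * p x0) | t. True} \<subseteq> M" and dom: "fst ` M = S"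
    using dominated_graph_total_extension[OF S p dominated_graph_ray[OF S p x0]] by blast
  define f where "f x = (THE a. (x, a) \<in> M)" for x
  have f_eq: "f x = a" if "(x, a) \<in> M" for x a
    unfolding f_def using that dominated_graphD(3)[OF M] by blast
  have f_graph: "(x, f x) \<in> M" if "x \<in> S" for x
    using that dom f_eq by force
  show ?thesis
  proof (rule that)
    show "f (x + y) = f x + f y" if "x \<in> S" "y \<in> S" for x y
      using f_eq[OF dominated_graphD(4)[OF M f_graph f_graph]] that .
    show "f (r *\<^sub>R x) = r * f x" if "x \<in> S" for x r
      using f_eq[OF dominated_graphD(5)[OF M f_graph]] that .
    show "f x \<le> p x" if "x \<in> S" for x
      using dominated_graphD(6)[OF M f_graph] that .
    have "(x0, p x0) \<in> M" using ray by (force intro: exI[of _ 1])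
    then show "f x0 = p x0" by (rule f_eq)
  qed
qed

text \<open>Real scalar multiplication on function spaces, so that \<open>linf\<close> is a subspace of a real
  vector space and Hahn-Banach applies to it.\<close>
instantiation "fun" :: (type, real_vector) real_vector
begin
definition scaleR_fun :: "real \<Rightarrow> ('a \<Rightarrow> 'b) \<Rightarrow> 'a \<Rightarrow> 'b" where
  "scaleR_fun r f = (\<lambda>x. r *\<^sub>R f x)"
instance by standard (auto simp: scaleR_fun_def fun_eq_iff algebra_simps)
end

lemma linf_bound:
  assumes "y \<in> linf"
  obtains K where "\<And>n. norm (y n) \<le> K"
  using assms unfolding linf_def by (auto elim!: BseqE intro: less_imp_le)

lemma linf_dominated:
  assumes y: "y \<in> linf" and le: "\<And>n. norm (z n) \<le> C * norm (y n)"
  shows "z \<in> linf"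
proof -
  obtain K where K: "\<And>n. norm (y n) \<le> K" using linf_bound[OF y] by metis
  have "norm (z n) \<le> \<bar>C\<bar> * K" for n
  proof -
    have "norm (z n) \<le> C * norm (y n)" by (rule le)
    also have "\<dots> \<le> \<bar>C\<bar> * norm (y n)" by (intro mult_right_mono) auto
    also have "\<dots> \<le> \<bar>C\<bar> * K" by (intro mult_left_mono K) auto
    finally show ?thesis .
  qed
  then show ?thesis unfolding linf_def by (auto intro: BseqI')
qed

lemma linf_add:
  assumes "y \<in> linf" "z \<in> linf"
  shows "(\<lambda>n. y n + z n) \<in> linf"
proof -
  obtain K1 K2 where "\<And>n. norm (y n) \<le> K1" "\<And>n. norm (z n) \<le> K2"
    using linf_bound assms by metis
  then have "norm (y n + z n) \<le> K1 + K2" for n by (meson add_mono norm_triangle_le)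
  then show ?thesis unfolding linf_def by (auto intro: BseqI')
qed

lemma linf_scaleR: "y \<in> linf \<Longrightarrow> (\<lambda>n. r *\<^sub>R y n) \<in> linf"
  using linf_dominated[of y "\<lambda>n. r *\<^sub>R y n" "\<bar>r\<bar>"] by simp

lemma linf_diff: "y \<in> linf \<Longrightarrow> z \<in> linf \<Longrightarrow> (\<lambda>n. y n - z n) \<in> linf"
  using linf_add[of y "\<lambda>n. (-1) *\<^sub>R z n"] linf_scaleR[of z "-1"] by simp

lemma subspace_linf: "subspace linf"
proof (rule subspaceI)
  show "0 \<in> linf" unfolding linf_def zero_fun_def by (auto intro: BseqI'[of _ 0])
  show "y + z \<in> linf" if "y \<in> linf" "z \<in> linf" for y z :: "nat \<Rightarrow> 'a"
    using linf_add[OF that] by (simp add: plus_fun_def)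
  show "r *\<^sub>R y \<in> linf" if "y \<in> linf" for r and y :: "nat \<Rightarrow> 'a"
    using linf_scaleR[OF that] by (simp add: scaleR_fun_def)
qed

lemma linf_shift:
  assumes "y \<in> linf"
  shows "(\<lambda>n. y (n + k)) \<in> linf"
proof -
  obtain K where "\<And>n. norm (y n) \<le> K" using linf_bound[OF assms] by metis
  then show ?thesis unfolding linf_def by (auto intro: BseqI')
qed

lemma linf_lshift: "y \<in> linf \<Longrightarrow> lshift y \<in> linf"
  using linf_shift[of y 1] unfolding lshift_def by simp

lemma sum_shift_norm:
  assumes "\<And>k. norm (y k) \<le> K"
  shows "norm (\<Sum>i<n. y (i + j)) \<le> real n * K"
  using sum_norm_le[of "{..<n}" "\<lambda>i. y (i + j)" "\<lambda>_. K"] assms by simp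

lemma linf_window_sums:
  assumes "y \<in> linf"
  shows "(\<lambda>j. \<Sum>i<N. y (i + j)) \<in> linf"
proof -
  obtain K where "\<And>n. norm (y n) \<le> K" using linf_bound[OF assms] by metis
  then have "norm (\<Sum>i<N. y (i + j)) \<le> real N * K" for j by (rule sum_shift_norm)
  then show ?thesis unfolding linf_def by (auto intro: BseqI')
qed

lemma subadditive_multiple_bound:
  fixes b :: "nat \<Rightarrow> real"
  assumes sa: "\<And>m n. real (m + n) * b (m + n) \<le> real m * b m + real n * b n"
  shows "real (q * m + r) * b (q * m + r) \<le> real q * (real m * b m) + real r * b r"
proof (induction q)
  case (Suc q)
  have "real (Suc q * m + r) * b (Suc q * m + r) = real (m + (q * m + r)) * b (m + (q * m + r))"
    by (simp add: add.assoc)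
  also have "\<dots> \<le> real m * b m + real (q * m + r) * b (q * m + r)" by (rule sa)
  also have "\<dots> \<le> real m * b m + (real q * (real m * b m) + real r * b r)" using Suc by simp
  finally show ?case by (simp add: algebra_simps)
qed simp

text \<open>The averaged bound behind Fekete's lemma: writing \<open>n = q m + r\<close> with \<open>r < m\<close>, the \<open>q\<close> full
  blocks of length \<open>m\<close> contribute at most \<open>b m\<close> on average and the remainder at most \<open>m K / n\<close>.\<close>
lemma subadditive_average_bound:
  fixes b :: "nat \<Rightarrow> real"
  assumes nonneg: "\<And>n. 0 \<le> b n" and bounded: "\<And>n. b n \<le> K"
    and sa: "\<And>m n. real (m + n) * b (m + n) \<le> real m * b m + real n * b n"
    and m: "m \<ge> 1" and n: "n \<ge> 1"
  shows "b n \<le> b m + real m * K / real n"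
proof -
  define q where "q = n div m"
  define r where "r = n mod m"
  have nqr: "n = q * m + r" by (simp add: q_def r_def)
  have rm: "r < m" using m by (simp add: r_def)
  have qm: "real q * real m \<le> real n" using nqr by (metis le_add1 of_nat_le_iff of_nat_mult)
  have K0: "0 \<le> K" using nonneg[of 0] bounded[of 0] by simp
  have "real n * b n \<le> real q * (real m * b m) + real r * b r"
    using subadditive_multiple_bound[OF sa, of q m r] nqr by simp
  also have "\<dots> \<le> real n * b m + real m * K"
  proof (rule add_mono)
    show "real q * (real m * b m) \<le> real n * b m"
      using qm nonneg[of m] by (simp add: mult.assoc[symmetric] mult_right_mono)
    show "real r * b r \<le> real m * K"
      using rm bounded[of r] nonneg[of r] K0 by (intro mult_mono) auto
  qed
  finally have "real n * b n \<le> real n * b m + real m * K" .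
  moreover have "real n > 0" using n by simp
  ultimately show ?thesis by (simp add: field_simps)
qed

lemma fekete:
  fixes b :: "nat \<Rightarrow> real"
  assumes nonneg: "\<And>n. 0 \<le> b n" and bounded: "\<And>n. b n \<le> K"
    and sa: "\<And>m n. real (m + n) * b (m + n) \<le> real m * b m + real n * b n"
  shows "b \<longlonglongrightarrow> lim b" and "\<And>m. m \<ge> 1 \<Longrightarrow> lim b \<le> b m"
proof -
  define I where "I = Inf (b ` {1..})"
  have bdd: "bdd_below (b ` {1..})" using nonneg by (auto intro!: bdd_belowI[of _ 0])
  have I_le: "I \<le> b m" if "m \<ge> 1" for m
    unfolding I_def by (rule cInf_lower) (use that bdd in auto)
  have K0: "0 \<le> K" using nonneg[of 0] bounded[of 0] by simp
  have "b \<longlonglongrightarrow> I"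
  proof (rule LIMSEQ_I)
    fix e :: real assume e: "0 < e"
    obtain m where m: "m \<ge> 1" "b m < I + e/2"
      using cInf_lessD[of "b ` {1..}" "I + e/2"] e unfolding I_def by auto
    obtain N :: nat where N: "real m * K * 2 / e < real N" using reals_Archimedean2 by blast
    have "0 \<le> real m * K * 2 / e" using K0 e by simp
    then have N_pos: "real N > 0" using N by linarith
    show "\<exists>no. \<forall>n\<ge>no. norm (b n - I) < e"
    proof (intro exI[of _ "N + 1"] allI impI)
      fix n assume n: "N + 1 \<le> n"
      have "b n \<le> b m + real m * K / real n"
        by (rule subadditive_average_bound[OF nonneg bounded sa m(1)]) (use n in simp)
      also have "real m * K / real n \<le> real m * K / real N"
        using n K0 N_pos by (intro divide_left_mono) auto
      also have "\<dots> < e/2" using N e N_pos by (simp add: field_simps)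
      finally have "b n < I + e" using m by simp
      moreover have "I \<le> b n" using I_le n by simp
      ultimately show "norm (b n - I) < e" by simp
    qed
  qed
  moreover from this have "lim b = I" by (rule limI)
  ultimately show "b \<longlonglongrightarrow> lim b" and "\<And>m. m \<ge> 1 \<Longrightarrow> lim b \<le> b m" using I_le by auto
qed

definition avg_sup :: "(nat \<Rightarrow> 'a::real_normed_vector) \<Rightarrow> nat \<Rightarrow> real" where
  "avg_sup y n = (SUP j. norm (\<Sum>i<n. y (i + j)) / real n)"

lemma pfun_eq_lim_avg_sup: "pfun y = lim (avg_sup y)"
  unfolding pfun_def avg_sup_def by simp

lemma window_average_le:
  assumes "\<And>k. norm (y k) \<le> K"
  shows "norm (\<Sum>i<n. y (i + j)) / real n \<le> K"
proof (cases "n = 0")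
  case True
  have "0 \<le> K" using assms[of 0] norm_ge_zero[of "y 0"] by linarith
  then show ?thesis using True by simp
next
  case False
  then show ?thesis using sum_shift_norm[OF assms, where n=n and j=j] by (simp add: field_simps)
qed

lemma avg_sup_upper:
  assumes "\<And>k. norm (y k) \<le> K"
  shows "norm (\<Sum>i<n. y (i + j)) / real n \<le> avg_sup y n"
  unfolding avg_sup_def
  by (rule cSUP_upper) (auto intro: bdd_aboveI2 window_average_le[OF assms])

lemma avg_sup_upper_sum:
  assumes "\<And>k. norm (y k) \<le> K"
  shows "norm (\<Sum>i<n. y (i + j)) \<le> real n * avg_sup y n"
proof (cases "n = 0")
  case False
  then show ?thesis using avg_sup_upper[OF assms, where n=n and j=j] by (simp add: field_simps)
qed simp

lemma avg_sup_least:
  assumes "\<And>j. norm (\<Sum>i<n. y (i + j)) / real n \<le> C"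
  shows "avg_sup y n \<le> C"
  unfolding avg_sup_def by (rule cSUP_least) (use assms in auto)

lemma avg_sup_nonneg:
  assumes "\<And>k. norm (y k) \<le> K"
  shows "0 \<le> avg_sup y n"
  using avg_sup_upper[OF assms, where n=n and j=0] by (rule order_trans[rotated]) simp

lemma avg_sup_le:
  assumes "\<And>k. norm (y k) \<le> K"
  shows "avg_sup y n \<le> K"
  by (rule avg_sup_least) (rule window_average_le[OF assms])

text \<open>Splitting a window of length \<open>m + n\<close> into two windows shows subadditivity.\<close>
lemma avg_sup_subadditive:
  assumes K: "\<And>k. norm (y k) \<le> K"
  shows "real (m + n) * avg_sup y (m + n) \<le> real m * avg_sup y m + real n * avg_sup y n"
proof (cases "m + n = 0")
  case False
  then have pos: "real (m + n) > 0" by (metis of_nat_0_less_iff neq0_conv)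
  have "avg_sup y (m + n) \<le> (real m * avg_sup y m + real n * avg_sup y n) / real (m + n)"
  proof (rule avg_sup_least)
    fix j
    have "(\<Sum>i<m + n. y (i + j)) = (\<Sum>i<m. y (i + j)) + (\<Sum>i<n. y (i + (m + j)))"
      by (induction n) (simp_all add: algebra_simps)
    then have "norm (\<Sum>i<m + n. y (i + j)) \<le> norm (\<Sum>i<m. y (i + j)) + norm (\<Sum>i<n. y (i + (m + j)))"
      by (simp add: norm_triangle_ineq)
    also have "\<dots> \<le> real m * avg_sup y m + real n * avg_sup y n"
      by (intro add_mono avg_sup_upper_sum[OF K])
    finally show "norm (\<Sum>i<m + n. y (i + j)) / real (m + n)
        \<le> (real m * avg_sup y m + real n * avg_sup y n) / real (m + n)"
      using pos by (intro divide_right_mono) auto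
  qed
  then show ?thesis using pos by (simp add: field_simps)
qed simp

lemma avg_sup_tendsto_pfun:
  assumes "y \<in> linf"
  shows "avg_sup y \<longlonglongrightarrow> pfun y" and "\<And>m. m \<ge> 1 \<Longrightarrow> pfun y \<le> avg_sup y m"
proof -
  obtain K where K: "\<And>n. norm (y n) \<le> K" using linf_bound[OF assms] by metis
  note fekete_avg = fekete[of "avg_sup y" K, OF avg_sup_nonneg[OF K] avg_sup_le[OF K]
      avg_sup_subadditive[OF K]]
  show "avg_sup y \<longlonglongrightarrow> pfun y" and "\<And>m. m \<ge> 1 \<Longrightarrow> pfun y \<le> avg_sup y m"
    using fekete_avg unfolding pfun_eq_lim_avg_sup by auto
qed

text \<open>With \<open>n = 1\<close>: \<open>pfun\<close> is bounded by the sup-norm.\<close>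
lemma pfun_le_supnorm:
  assumes "y \<in> linf"
  shows "pfun y \<le> supnorm y"
  using avg_sup_tendsto_pfun(2)[OF assms, of 1] by (simp add: avg_sup_def supnorm_def)

lemma pfun_add:
  assumes y: "y \<in> linf" and z: "z \<in> linf"
  shows "pfun (\<lambda>n. y n + z n) \<le> pfun y + pfun z"
proof -
  obtain K1 K2 where K1: "\<And>n. norm (y n) \<le> K1" and K2: "\<And>n. norm (z n) \<le> K2"
    using linf_bound y z by metis
  have "avg_sup (\<lambda>n. y n + z n) n \<le> avg_sup y n + avg_sup z n" for n
  proof (rule avg_sup_least)
    fix j
    have "norm (\<Sum>i<n. y (i + j) + z (i + j)) \<le> norm (\<Sum>i<n. y (i + j)) + norm (\<Sum>i<n. z (i + j))"
      unfolding sum.distrib by (rule norm_triangle_ineq)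
    then have "norm (\<Sum>i<n. y (i + j) + z (i + j)) / real n \<le>
        norm (\<Sum>i<n. y (i + j)) / real n + norm (\<Sum>i<n. z (i + j)) / real n"
      by (simp add: add_divide_distrib[symmetric] divide_right_mono)
    also have "\<dots> \<le> avg_sup y n + avg_sup z n"
      by (intro add_mono avg_sup_upper[OF K1] avg_sup_upper[OF K2])
    finally show "norm (\<Sum>i<n. y (i + j) + z (i + j)) / real n \<le> avg_sup y n + avg_sup z n" .
  qed
  then show ?thesis
    by (intro LIMSEQ_le[OF avg_sup_tendsto_pfun(1)[OF linf_add[OF y z]]
          tendsto_add[OF avg_sup_tendsto_pfun(1)[OF y] avg_sup_tendsto_pfun(1)[OF z]]]) auto
qed

lemma pfun_scaleR_le:
  assumes y: "y \<in> linf"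
  shows "pfun (\<lambda>n. r *\<^sub>R y n) \<le> \<bar>r\<bar> * pfun y"
proof -
  obtain K where K: "\<And>n. norm (y n) \<le> K" using linf_bound y by metis
  have "avg_sup (\<lambda>n. r *\<^sub>R y n) n \<le> \<bar>r\<bar> * avg_sup y n" for n
  proof (rule avg_sup_least)
    fix j
    have "norm (\<Sum>i<n. r *\<^sub>R y (i + j)) / real n = \<bar>r\<bar> * (norm (\<Sum>i<n. y (i + j)) / real n)"
      by (simp add: scaleR_sum_right[symmetric])
    also have "\<dots> \<le> \<bar>r\<bar> * avg_sup y n" by (intro mult_left_mono avg_sup_upper[OF K]) auto
    finally show "norm (\<Sum>i<n. r *\<^sub>R y (i + j)) / real n \<le> \<bar>r\<bar> * avg_sup y n" .
  qed
  then show ?thesis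
    by (intro LIMSEQ_le[OF avg_sup_tendsto_pfun(1)[OF linf_scaleR[OF y]]
          tendsto_mult_left[OF avg_sup_tendsto_pfun(1)[OF y]]]) auto
qed

lemma pfun_scaleR_pos:
  assumes y: "y \<in> linf" and r: "r > 0"
  shows "pfun (\<lambda>n. r *\<^sub>R y n) = r * pfun y"
proof (rule antisym)
  show "pfun (\<lambda>n. r *\<^sub>R y n) \<le> r * pfun y" using pfun_scaleR_le[OF y, of r] r by simp
  have "pfun y = pfun (\<lambda>n. (1/r) *\<^sub>R (r *\<^sub>R y n))" using r by simp
  also have "\<dots> \<le> (1/r) * pfun (\<lambda>n. r *\<^sub>R y n)"
    using pfun_scaleR_le[OF linf_scaleR[OF y], of "1/r" r] r by simp
  finally show "r * pfun y \<le> pfun (\<lambda>n. r *\<^sub>R y n)" using r by (simp add: field_simps)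
qed

lemma sublinear_on_pfun: "sublinear_on linf pfun"
  unfolding sublinear_on_def plus_fun_def scaleR_fun_def using pfun_add pfun_scaleR_pos by blast

lemma pfun_bounded_window_sums:
  assumes w: "w \<in> linf" and C: "\<And>n j. norm (\<Sum>i<n. w (i + j)) \<le> C"
  shows "pfun w \<le> 0"
proof -
  have "avg_sup w n \<le> C * (1 / real n)" for n
    by (rule avg_sup_least) (use C in \<open>simp add: divide_right_mono\<close>)
  moreover have "(\<lambda>n. C * (1 / real n)) \<longlonglongrightarrow> C * 0"
    by (intro tendsto_mult_left lim_1_over_n)
  ultimately have "pfun w \<le> C * 0"
    by (intro LIMSEQ_le[OF avg_sup_tendsto_pfun(1)[OF w]]) auto
  then show ?thesis by simp
qed

text \<open>\<open>T y - y\<close> and \<open>y - T y\<close> have telescoping window sums, hence \<open>pfun \<le> 0\<close>.\<close>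
lemma pfun_shift_difference:
  assumes y: "y \<in> linf"
  shows "pfun (\<lambda>n. lshift y n - y n) \<le> 0" and "pfun (\<lambda>n. y n - lshift y n) \<le> 0"
proof -
  obtain K where K: "\<And>n. norm (y n) \<le> K" using linf_bound y by metis
  have bound: "norm (y (n + j) - y j) \<le> 2 * K" for n j
    using norm_triangle_ineq4[of "y (n + j)" "y j"] K[of "n + j"] K[of j] by simp
  have "(\<Sum>i<n. lshift y (i + j) - y (i + j)) = y (n + j) - y j" for n j
    using sum_lessThan_telescope[of "\<lambda>i. y (i + j)" n] unfolding lshift_def by simp
  then show "pfun (\<lambda>n. lshift y n - y n) \<le> 0"
    using pfun_bounded_window_sums[OF linf_diff[OF linf_lshift[OF y] y], of "2 * K"] bound
    by simp
  have "(\<Sum>i<n. y (i + j) - lshift y (i + j)) = y j - y (n + j)" for n j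
    using sum_lessThan_telescope'[of "\<lambda>i. y (i + j)" n] unfolding lshift_def by simp
  then show "pfun (\<lambda>n. y n - lshift y n) \<le> 0"
    using pfun_bounded_window_sums[OF linf_diff[OF y linf_lshift[OF y]], of "2 * K"] bound
    by (simp add: norm_minus_commute)
qed

lemma complex_normed_spaceD:
  assumes "complex_normed_space sc"
  shows "\<And>r v. sc (complex_of_real r) v = r *\<^sub>R v"
    and "\<And>a b v. sc (a * b) v = sc a (sc b v)"
    and "\<And>a v w. sc a (v + w) = sc a v + sc a w"
    and "\<And>a b v. sc (a + b) v = sc a v + sc b v"
    and "\<And>a v. norm (sc a v) = cmod a * norm v"
  using assms unfolding complex_normed_space_def by blast+

lemma complex_scale_decompose:
  assumes "complex_normed_space sc"
  shows "sc c v = Re c *\<^sub>R v + Im c *\<^sub>R sc \<i> v"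
proof -
  have "c = complex_of_real (Re c) + complex_of_real (Im c) * \<i>" by (simp add: complex_eq_iff)
  then have "sc c v = sc (complex_of_real (Re c) + complex_of_real (Im c) * \<i>) v" by simp
  also have "\<dots> = Re c *\<^sub>R v + Im c *\<^sub>R sc \<i> v" by (simp only: complex_normed_spaceD[OF assms])
  finally show ?thesis .
qed

lemma linf_complex_scale:
  assumes "complex_normed_space sc" and "y \<in> linf"
  shows "(\<lambda>n. sc c (y n)) \<in> linf"
  by (rule linf_dominated[OF assms(2), of _ "cmod c"]) (simp add: complex_normed_spaceD(5)[OF assms(1)])

lemma banach_limitD:
  assumes "banach_limit sc L"
  shows "\<And>y z. y \<in> linf \<Longrightarrow> z \<in> linf \<Longrightarrow> L (\<lambda>n. y n + z n) = L y + L z"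
    and "\<And>c y. y \<in> linf \<Longrightarrow> L (\<lambda>n. sc c (y n)) = c * L y"
    and "\<And>y. y \<in> linf \<Longrightarrow> cmod (L y) \<le> supnorm y"
    and "\<And>y. y \<in> linf \<Longrightarrow> L (lshift y) = L y"
  using assms unfolding banach_limit_def by blast+

text \<open>By shift-invariance, a Banach limit takes the value \<open>N L x\<close> on the window sums of length \<open>N\<close>.\<close>
lemma banach_limit_window_sums:
  assumes sc: "complex_normed_space sc" and L: "banach_limit sc L" and x: "x \<in> linf"
  shows "L (\<lambda>j. \<Sum>i<N. x (i + j)) = of_nat N * L x"
proof (induction N)
  case 0
  have "(\<lambda>j. \<Sum>i<0. x (i + j)) = (\<lambda>n. sc 0 (x n))"
    using complex_normed_spaceD(1)[OF sc, of 0] by simp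
  then show ?case using banach_limitD(2)[OF L x, of 0] by simp
next
  case (Suc N)
  have shift: "L (\<lambda>n. x (n + k)) = L x" for k
  proof (induction k)
    case (Suc k)
    have "(\<lambda>n. x (n + Suc k)) = lshift (\<lambda>n. x (n + k))" by (simp add: lshift_def)
    then show ?case using banach_limitD(4)[OF L linf_shift[OF x, of k]] Suc by simp
  qed simp
  have "(\<lambda>j. \<Sum>i<Suc N. x (i + j)) = (\<lambda>j. (\<Sum>i<N. x (i + j)) + x (j + N))"
    by (simp add: add.commute)
  then have "L (\<lambda>j. \<Sum>i<Suc N. x (i + j)) = L (\<lambda>j. \<Sum>i<N. x (i + j)) + L (\<lambda>j. x (j + N))"
    using banach_limitD(1)[OF L linf_window_sums[OF x] linf_shift[OF x]] by simp
  then show ?case using Suc shift[of N] by (simp add: algebra_simps)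
qed

lemma banach_limit_le_pfun:
  assumes sc: "complex_normed_space sc" and L: "banach_limit sc L" and x: "x \<in> linf"
  shows "cmod (L x) \<le> pfun x"
proof -
  have "cmod (L x) \<le> avg_sup x N" if N: "N \<ge> 1" for N
  proof -
    \<comment> \<open>\<open>L x\<close> is also the value of \<open>L\<close> at the averaged window sums, whose sup-norm is \<open>avg_sup x N\<close>.\<close>
    define s where "s = (\<lambda>j. \<Sum>i<N. x (i + j))"
    define c where "c = complex_of_real (1 / real N)"
    have s: "s \<in> linf" unfolding s_def by (rule linf_window_sums[OF x])
    have "L (\<lambda>n. sc c (s n)) = c * (of_nat N * L x)"
      using banach_limitD(2)[OF L s] banach_limit_window_sums[OF sc L x] by (simp add: s_def)
    also have "\<dots> = L x" using N by (simp add: c_def field_simps)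
    finally have "L x = L (\<lambda>n. sc c (s n))" ..
    also have "cmod \<dots> \<le> supnorm (\<lambda>n. sc c (s n))"
      by (rule banach_limitD(3)[OF L linf_complex_scale[OF sc s]])
    also have "\<dots> = avg_sup x N"
      unfolding supnorm_def avg_sup_def s_def c_def
      by (simp add: complex_normed_spaceD(5)[OF sc] norm_divide)
    finally show ?thesis .
  qed
  then show ?thesis by (intro LIMSEQ_le_const[OF avg_sup_tendsto_pfun(1)[OF x]]) auto
qed

definition pfun_dominated :: "((nat \<Rightarrow> 'a::real_normed_vector) \<Rightarrow> real) \<Rightarrow> bool" where
  "pfun_dominated f \<longleftrightarrow>
     (\<forall>y\<in>linf. \<forall>z\<in>linf. f (\<lambda>n. y n + z n) = f y + f z) \<and>
     (\<forall>y\<in>linf. \<forall>r. f (\<lambda>n. r *\<^sub>R y n) = r * f y) \<and>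
     (\<forall>y\<in>linf. f y \<le> pfun y)"

lemma pfun_dominatedD:
  assumes "pfun_dominated f"
  shows "\<And>y z. y \<in> linf \<Longrightarrow> z \<in> linf \<Longrightarrow> f (\<lambda>n. y n + z n) = f y + f z"
    and "\<And>y r. y \<in> linf \<Longrightarrow> f (\<lambda>n. r *\<^sub>R y n) = r * f y"
    and "\<And>y. y \<in> linf \<Longrightarrow> f y \<le> pfun y"
  using assms unfolding pfun_dominated_def by blast+

lemma pfun_dominated_lincomb:
  assumes f: "pfun_dominated f" and y: "y \<in> linf" and z: "z \<in> linf"
  shows "f (\<lambda>n. a *\<^sub>R y n + b *\<^sub>R z n) = a * f y + b * f z"
  using pfun_dominatedD(1)[OF f linf_scaleR[OF y] linf_scaleR[OF z]] pfun_dominatedD(2)[OF f] y z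
  by simp

lemma pfun_dominated_shift_invariant:
  assumes f: "pfun_dominated f" and y: "y \<in> linf"
  shows "f (lshift y) = f y"
proof -
  have Ty: "lshift y \<in> linf" by (rule linf_lshift[OF y])
  \<comment> \<open>Both \<open>T y - y\<close> and \<open>y - T y\<close> have \<open>pfun \<le> 0\<close>, so \<open>f\<close> vanishes on them.\<close>
  have "f (lshift y) - f y = f (\<lambda>n. lshift y n - y n)"
    using pfun_dominated_lincomb[OF f Ty y, of 1 "-1"] by simp
  also have "\<dots> \<le> pfun (\<lambda>n. lshift y n - y n)"
    by (rule pfun_dominatedD(3)[OF f linf_diff[OF Ty y]])
  finally have "f (lshift y) - f y \<le> 0" using pfun_shift_difference(1)[OF y] by linarith
  moreover have "f y - f (lshift y) = f (\<lambda>n. y n - lshift y n)"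
    using pfun_dominated_lincomb[OF f y Ty, of 1 "-1"] by simp
  moreover have "\<dots> \<le> pfun (\<lambda>n. y n - lshift y n)"
    by (rule pfun_dominatedD(3)[OF f linf_diff[OF y Ty]])
  ultimately show ?thesis using pfun_shift_difference(2)[OF y] by linarith
qed

definition complexify ::
  "(complex \<Rightarrow> 'a \<Rightarrow> 'a) \<Rightarrow> ((nat \<Rightarrow> 'a) \<Rightarrow> real) \<Rightarrow> (nat \<Rightarrow> 'a) \<Rightarrow> complex" where
  "complexify sc f y = Complex (f y) (- f (\<lambda>n. sc \<i> (y n)))"

lemma complexify_scale:
  assumes sc: "complex_normed_space sc" and f: "pfun_dominated f" and y: "y \<in> linf"
  shows "complexify sc f (\<lambda>n. sc c (y n)) = c * complexify sc f y"
proof -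
  note sc_ax = complex_normed_spaceD[OF sc]
  define iy where "iy y = (\<lambda>n. sc \<i> (y n))" for y :: "nat \<Rightarrow> 'a"
  have iy: "iy y \<in> linf" unfolding iy_def by (rule linf_complex_scale[OF sc y])
  have decomp: "(\<lambda>n. sc c (y n)) = (\<lambda>n. Re c *\<^sub>R y n + Im c *\<^sub>R iy y n)" for c
    unfolding iy_def by (rule ext) (rule complex_scale_decompose[OF sc])
  have re: "f (\<lambda>n. sc c (y n)) = Re c * f y + Im c * f (iy y)"
    unfolding decomp by (rule pfun_dominated_lincomb[OF f y iy])
  have "iy (\<lambda>n. sc c (y n)) = (\<lambda>n. sc (\<i> * c) (y n))" unfolding iy_def by (simp add: sc_ax)
  also have "\<dots> = (\<lambda>n. (- Im c) *\<^sub>R y n + Re c *\<^sub>R iy y n)" unfolding decomp by simp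
  finally have im: "f (iy (\<lambda>n. sc c (y n))) = (- Im c) * f y + Re c * f (iy y)"
    using pfun_dominated_lincomb[OF f y iy, of "- Im c" "Re c"] by (simp only:)
  show ?thesis using re im unfolding complexify_def iy_def by (simp add: complex_eq_iff algebra_simps)
qed

text \<open>Rotating \<open>y\<close> by a unimodular scalar makes the value real, and the real part is bounded by
  \<open>pfun \<le> supnorm\<close>; so the complexification is bounded by the sup-norm.\<close>
lemma complexify_norm_le:
  assumes sc: "complex_normed_space sc" and f: "pfun_dominated f" and y: "y \<in> linf"
  shows "cmod (complexify sc f y) \<le> supnorm y"
proof (cases "complexify sc f y = 0")
  case True
  obtain K where "\<And>n. norm (y n) \<le> K" using linf_bound[OF y] by metis
  then have "norm (y 0) \<le> supnorm y"
    unfolding supnorm_def by (intro cSUP_upper bdd_aboveI2) auto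
  then have "0 \<le> supnorm y" using norm_ge_zero[of "y 0"] by linarith
  then show ?thesis using True by simp
next
  case False
  define L where "L = complexify sc f y"
  define c where "c = cnj L / complex_of_real (cmod L)"
  have c_unit: "cmod c = 1" using False by (simp add: c_def L_def norm_divide)
  have "c * L = complex_of_real (cmod L)"
    using False by (simp add: c_def L_def complex_norm_square[symmetric] power2_eq_square field_simps)
  then have "cmod L = f (\<lambda>n. sc c (y n))"
    using complexify_scale[OF sc f y, of c] by (simp add: L_def complexify_def complex_eq_iff)
  also have "\<dots> \<le> pfun (\<lambda>n. sc c (y n))"
    by (rule pfun_dominatedD(3)[OF f linf_complex_scale[OF sc y]])
  also have "\<dots> \<le> supnorm (\<lambda>n. sc c (y n))"
    by (rule pfun_le_supnorm[OF linf_complex_scale[OF sc y]])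
  also have "\<dots> = supnorm y"
    unfolding supnorm_def by (simp add: complex_normed_spaceD(5)[OF sc] c_unit)
  finally show ?thesis by (simp add: L_def)
qed

lemma complexified_banach_limit:
  assumes sc: "complex_normed_space sc" and f: "pfun_dominated f"
  shows "banach_limit sc (complexify sc f)"
  unfolding banach_limit_def
proof (intro conjI ballI allI)
  fix y z :: "nat \<Rightarrow> 'a" assume y: "y \<in> linf" and z: "z \<in> linf"
  have "(\<lambda>n. sc \<i> (y n + z n)) = (\<lambda>n. sc \<i> (y n) + sc \<i> (z n))"
    by (simp add: complex_normed_spaceD(3)[OF sc])
  then show "complexify sc f (\<lambda>n. y n + z n) = complexify sc f y + complexify sc f z"
    using pfun_dominatedD(1)[OF f y z]
      pfun_dominatedD(1)[OF f linf_complex_scale[OF sc y] linf_complex_scale[OF sc z]]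
    unfolding complexify_def by (simp add: complex_eq_iff)
next
  fix c and y :: "nat \<Rightarrow> 'a" assume "y \<in> linf"
  then show "complexify sc f (\<lambda>n. sc c (y n)) = c * complexify sc f y"
    by (rule complexify_scale[OF sc f])
next
  fix y :: "nat \<Rightarrow> 'a" assume "y \<in> linf"
  then show "cmod (complexify sc f y) \<le> supnorm y" by (rule complexify_norm_le[OF sc f])
next
  fix y :: "nat \<Rightarrow> 'a" assume y: "y \<in> linf"
  have "(\<lambda>n. sc \<i> (lshift y n)) = lshift (\<lambda>n. sc \<i> (y n))" unfolding lshift_def by simp
  then show "complexify sc f (lshift y) = complexify sc f y"
    using pfun_dominated_shift_invariant[OF f y]
      pfun_dominated_shift_invariant[OF f linf_complex_scale[OF sc y]]
    unfolding complexify_def by simp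
qed

lemma banach_limit_attaining_pfun:
  assumes sc: "complex_normed_space sc" and x: "x \<in> linf"
  obtains L where "banach_limit sc L" and "Re (L x) = pfun x"
proof -
  obtain f where add: "\<And>y z. y \<in> linf \<Longrightarrow> z \<in> linf \<Longrightarrow> f (y + z) = f y + f z"
    and scale: "\<And>y r. y \<in> linf \<Longrightarrow> f (r *\<^sub>R y) = r * f y"
    and below: "\<And>y. y \<in> linf \<Longrightarrow> f y \<le> pfun y" and at_x: "f x = pfun x"
    using hahn_banach_sublinear[OF subspace_linf sublinear_on_pfun x] by blast
  have "pfun_dominated f"
    unfolding pfun_dominated_def
    using add scale below by (simp add: plus_fun_def scaleR_fun_def)
  then show ?thesis by (rule that[OF complexified_banach_limit[OF sc]]) (simp add: complexify_def at_x)
qed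

theorem mainTheorem10:
  fixes sc :: "complex \<Rightarrow> 'a::real_normed_vector \<Rightarrow> 'a"
    and x :: "nat \<Rightarrow> 'a"
  assumes "complex_normed_space sc"
    and "x \<in> linf"
  shows "pfun x = 0 \<longleftrightarrow> (\<forall>L. banach_limit sc L \<longrightarrow> L x = 0)"
proof
  assume "pfun x = 0"
  then show "\<forall>L. banach_limit sc L \<longrightarrow> L x = 0"
    using banach_limit_le_pfun[OF assms(1) _ assms(2)] by fastforce
next
  assume all_zero: "\<forall>L. banach_limit sc L \<longrightarrow> L x = 0"
  obtain L where L: "banach_limit sc L" and attains: "Re (L x) = pfun x"
    using banach_limit_attaining_pfun[OF assms] .
  have "L x = 0" using all_zero L by blast
  then show "pfun x = 0" using attains by simp
qed

end
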